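(* Let $\mathcal F\subset 2^{[n]}$, let $i\in[n]$, and let $\mathcal G=S_i(\mathcal F)$. Then for every positive integer $r$, $$\max\{|W(F_1,\ldots,F_r)|: F_1,\ldots,F_r\in\mathcal F\}\ \ge\ \max\{|W(G_1,\ldots,G_r)|: G_1,\ldots,G_r\in\mathcal G\}.$$
   Context: For sets $A_1,\ldots,A_r\subset[n]$, $W(A_1,\ldots,A_r)=(A_1\cup\cdots\cup A_r)\setminus(A_1\cap\cdots\cap A_r)$. For $\mathcal F\subset 2^{[n]}$ and $i\in[n]$, let $\mathcal F(i)=\{F\setminus\{i\}: i\in F\in\mathcal F\}$ and $\mathcal F(\bar i)=\{F\in\mathcal F: i\notin F\}$, both subfamilies of $2^{[n]\setminus\{i\}}$; a family $\mathcal G\subset 2^{[n]}$ is uniquely determined by $\mathcal G(i)$ and $\mathcal G(\bar i)$. The squashed family $S_i(\mathcal F)$ is the unique family $\mathcal G\subset 2^{[n]}$ with $\mathcal G(i)=\mathcal F(i)\cap\mathcal F(\bar i)$ and $\mathcal G(\bar i)=\mathcal F(i)\cup\mathcal F(\bar i)$. In the maxima the $r$ sets need not be distinct. *)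

theory Defs
  imports Main
begin

text \<open>W(A_1,...,A_r): union minus intersection; the r-tuple is A 0, ..., A (r-1).\<close>
definition W :: "nat \<Rightarrow> (nat \<Rightarrow> 'a set) \<Rightarrow> 'a set" where
  "W r A = (\<Union>j<r. A j) - (\<Inter>j<r. A j)"

definition fam_with :: "'a \<Rightarrow> 'a set set \<Rightarrow> 'a set set" where
  "fam_with i F = {X - {i} | X. X \<in> F \<and> i \<in> X}"

definition fam_without :: "'a \<Rightarrow> 'a set set \<Rightarrow> 'a set set" where
  "fam_without i F = {X \<in> F. i \<notin> X}"

text \<open>The squashed family: G(i) = F(i) \<inter> F(bar i), G(bar i) = F(i) \<union> F(bar i).\<close>
definition squash :: "'a \<Rightarrow> 'a set set \<Rightarrow> 'a set set" where
  "squash i F = (insert i ` (fam_with i F \<inter> fam_without i F))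
                \<union> (fam_with i F \<union> fam_without i F)"

end

theory Submission
  imports Defs
begin

text \<open>Given sets \<open>A\<^sub>1, \<dots>, A\<^sub>r\<close> of the squashed family, lift each \<open>A\<^sub>j \<notin> \<F>\<close> to
  \<open>A\<^sub>j \<union> {i} \<in> \<F>\<close>. This changes no set outside \<open>i\<close>, so it can only affect whether
  \<open>i \<in> W\<close>. If \<open>i \<in> W(A\<^sub>1, \<dots>, A\<^sub>r)\<close> but every lifted set contains \<open>i\<close>, some original
  \<open>A\<^sub>a\<close> contained \<open>i\<close>; such a set of the squashed family has \<open>A\<^sub>a, A\<^sub>a - {i} \<in> \<F>\<close>,
  and replacing its lift by \<open>A\<^sub>a - {i}\<close> puts \<open>i\<close> back into \<open>W\<close>. Hence every \<open>W\<close> over the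
  squashed family is contained in some \<open>W\<close> over \<open>\<F>\<close>.\<close>

lemma W_subset_Union: "W r A \<subseteq> (\<Union>j<r. A j)"
  unfolding W_def by blast

lemma mem_W_iff: "x \<in> W r A \<longleftrightarrow> (\<exists>j<r. x \<in> A j) \<and> (\<exists>j<r. x \<notin> A j)"
  unfolding W_def by blast

lemma W_subset_W_if_agree_off:
  assumes "\<And>j. B j - {i} = A j - {i}"
    and "i \<in> W r A \<Longrightarrow> i \<in> W r B"
  shows "W r A \<subseteq> W r B"
proof
  fix x assume x: "x \<in> W r A"
  show "x \<in> W r B"
  proof (cases "x = i")
    case True
    then show ?thesis using x assms(2) by simp
  next
    case False
    then have "\<And>j. x \<in> A j \<longleftrightarrow> x \<in> B j" using assms(1) by blast
    then show ?thesis using x by (simp add: mem_W_iff)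
  qed
qed

lemma squash_empty [simp]: "squash i {} = {}"
  unfolding squash_def fam_with_def fam_without_def by simp

lemma diff_singleton_mem_squash:
  assumes "X \<in> F"
  shows "X - {i} \<in> squash i F"
  using assms unfolding squash_def fam_with_def fam_without_def by (cases "i \<in> X") auto

lemma squash_subset_Pow:
  assumes "F \<subseteq> Pow S"
  shows "squash i F \<subseteq> Pow S"
  using assms unfolding squash_def fam_with_def fam_without_def by (auto simp: insert_absorb)

lemma squash_memD_lift:
  assumes "X \<in> squash i F"
  shows "X \<in> F \<or> insert i X \<in> F"
  using assms unfolding squash_def fam_with_def fam_without_def by (auto simp: insert_absorb)

lemma squash_memD_with:
  assumes "X \<in> squash i F" and "i \<in> X"
  shows "X \<in> F" and "X - {i} \<in> F"
  using assms unfolding squash_def fam_with_def fam_without_def by (auto simp: insert_absorb)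

lemma W_squash_subset_W:
  assumes A: "\<forall>j<r. A j \<in> squash i F"
  shows "\<exists>B. (\<forall>j<r. B j \<in> F) \<and> W r A \<subseteq> W r B"
proof -
  define lift where "lift j = (if A j \<in> F then A j else insert i (A j))" for j
  have lift_mem: "lift j \<in> F" if "j < r" for j
    using squash_memD_lift[of "A j" i F] A that unfolding lift_def by auto
  have lift_agree: "lift j - {i} = A j - {i}" for j
    unfolding lift_def by auto
  obtain B where B_mem: "\<forall>j<r. B j \<in> F" and B_agree: "\<And>j. B j - {i} = A j - {i}"
    and B_W: "i \<in> W r A \<Longrightarrow> i \<in> W r B"
  proof (cases "i \<in> W r A \<and> (\<forall>j<r. i \<in> lift j)")
    case False
    have "i \<in> W r lift" if iW: "i \<in> W r A"
    proof -
      obtain c where c: "c < r" "i \<notin> lift c"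
        using False iW by blast
      obtain a where a: "a < r" "i \<in> A a"
        using iW unfolding mem_W_iff by blast
      then have "i \<in> lift a" unfolding lift_def by simp
      with a c show ?thesis unfolding mem_W_iff by blast
    qed
    then show ?thesis using that lift_mem lift_agree by blast
  next
    case True
    then obtain a b where ab: "a < r" "b < r" "i \<in> A a" "i \<notin> A b"
      unfolding mem_W_iff by blast
    define B where "B = lift(a := A a - {i})"
    have "A a - {i} \<in> F"
      using A ab by (intro squash_memD_with(2)) auto
    then have "\<forall>j<r. B j \<in> F"
      using lift_mem unfolding B_def by simp
    moreover have "B j - {i} = A j - {i}" for j
      using lift_agree unfolding B_def by simp
    moreover have "i \<in> W r B"
    proof -
      have "a \<noteq> b" using ab by blast
      then have "i \<in> B b" using True ab unfolding B_def by simp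
      moreover have "i \<notin> B a" unfolding B_def by simp
      ultimately show ?thesis using ab unfolding mem_W_iff by blast
    qed
    ultimately show ?thesis using that by blast
  qed
  have "W r A \<subseteq> W r B"
    using B_agree B_W by (rule W_subset_W_if_agree_off)
  then show ?thesis using B_mem by blast
qed

definition card_W_values :: "nat \<Rightarrow> 'a set set \<Rightarrow> nat set" where
  "card_W_values r \<G> = {card (W r A) | A. \<forall>j<r. A j \<in> \<G>}"

lemma card_W_values_subset:
  assumes "\<G> \<subseteq> Pow S"
  shows "card_W_values r \<G> \<subseteq> card ` Pow S"
proof
  fix k assume "k \<in> card_W_values r \<G>"
  then obtain A where A: "\<forall>j<r. A j \<in> \<G>" and k: "k = card (W r A)"
    unfolding card_W_values_def by blast
  have "W r A \<subseteq> S" using A assms W_subset_Union[of r A] by blast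
  then show "k \<in> card ` Pow S" unfolding k by blast
qed

lemma finite_card_W_values:
  assumes "finite S" and "\<G> \<subseteq> Pow S"
  shows "finite (card_W_values r \<G>)"
  using finite_subset[OF card_W_values_subset[OF assms(2)]] assms(1) by simp

lemma card_W_values_nonempty:
  assumes "X \<in> \<G>"
  shows "card_W_values r \<G> \<noteq> {}"
proof -
  have "card (W r (\<lambda>_. X)) \<in> card_W_values r \<G>"
    using assms unfolding card_W_values_def by blast
  then show ?thesis by blast
qed

lemma card_W_values_squash_dominated:
  assumes "finite S" and "F \<subseteq> Pow S" and "k \<in> card_W_values r (squash i F)"
  shows "\<exists>l\<in>card_W_values r F. k \<le> l"
proof -
  obtain A where A: "\<forall>j<r. A j \<in> squash i F" and k: "k = card (W r A)"
    using assms(3) unfolding card_W_values_def by blast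
  obtain B where B: "\<forall>j<r. B j \<in> F" and AB: "W r A \<subseteq> W r B"
    using W_squash_subset_W[OF A] by blast
  have "W r B \<subseteq> S" using B assms(2) W_subset_Union[of r B] by blast
  then have "finite (W r B)" using assms(1) by (rule finite_subset)
  then have "k \<le> card (W r B)" unfolding k using AB by (rule card_mono)
  moreover have "card (W r B) \<in> card_W_values r F"
    using B unfolding card_W_values_def by blast
  ultimately show ?thesis by blast
qed

lemma Max_le_Max_if_dominated:
  fixes S T :: "'a::linorder set"
  assumes "finite S" "finite T" "S \<noteq> {}"
    and "\<And>x. x \<in> S \<Longrightarrow> \<exists>y\<in>T. x \<le> y"
  shows "Max S \<le> Max T"
proof (rule Max.boundedI[OF assms(1,3)])
  fix x assume "x \<in> S"
  then obtain y where "y \<in> T" "x \<le> y" using assms(4) by blast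
  then show "x \<le> Max T" using Max_ge[OF assms(2)] order_trans by blast
qed

theorem lemma1:
  fixes n i r :: nat and F :: "nat set set"
  assumes "F \<subseteq> Pow {1..n}" and "i \<in> {1..n}" and "r \<ge> 1"
  shows "Max {card (W r A) | A. \<forall>j<r. A j \<in> F}
           \<ge> Max {card (W r A) | A. \<forall>j<r. A j \<in> squash i F}"
proof (cases "F = {}")
  case True
  \<comment> \<open>both sides are the unspecified value \<open>Max {}\<close>\<close>
  show ?thesis unfolding True squash_empty by (rule order_refl)
next
  case False
  then obtain X where "X \<in> F" by blast
  have "Max (card_W_values r (squash i F)) \<le> Max (card_W_values r F)"
  proof (rule Max_le_Max_if_dominated)
    show "finite (card_W_values r (squash i F))"
      by (rule finite_card_W_values[OF finite_atLeastAtMost squash_subset_Pow[OF assms(1)]])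
    show "finite (card_W_values r F)"
      by (rule finite_card_W_values[OF finite_atLeastAtMost assms(1)])
    show "card_W_values r (squash i F) \<noteq> {}"
      using diff_singleton_mem_squash[OF \<open>X \<in> F\<close>] by (rule card_W_values_nonempty)
  qed (rule card_W_values_squash_dominated[OF finite_atLeastAtMost assms(1)])
  then show ?thesis by (simp only: card_W_values_def)
qed

end
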